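(* Fix a baseline $\mathbf{x}'\in\mathbb{R}^d$. Consider the Baseline Shapley (Bshap) value function $v^B_{\mathbf{x},f,p}(S)=f(\mathbf{x}_S;\mathbf{x}'_{\bar S})$ and the Conditional Expectation (CES) value function $v^C_{\mathbf{x},f,p}(S)=\mathbb{E}_{\mathbf{x}''_{\bar S}\sim p(\mathbf{x}''_{\bar S}\mid \mathbf{x}_S)}[f(\mathbf{x}_S;\mathbf{x}''_{\bar S})]$. For no finite $T$ is Bshap strong $T$-robust to off-manifold perturbations, and for no finite $T$ is CES strong $T$-robust to off-manifold perturbations.
   Context: Here $f:\mathbb{R}^d\to\mathbb{R}$ is a model, $p$ is a probability density on $\mathbb{R}^d$, $\mathbf{x}\in\mathbb{R}^d$ is the explicand, $S\subseteq[d]$, $\bar S=[d]\setminus S$, and $(\mathbf{x}_S;\mathbf{z}_{\bar S})$ denotes the vector whose coordinates in $S$ are those of $\mathbf{x}$ and whose coordinates in $\bar S$ are those of $\mathbf{z}$. A value function $v_{\mathbf{x},f,p}(S)$ is called strong $T$-robust to off-manifold perturbations if for any two models $f_1,f_2$ and any probability measure $p$, the condition $\max_{\mathbf{z}}|f_1(\mathbf{z})-f_2(\mathbf{z})|\,p(\mathbf{z})\le\epsilon$ always entails $|v_{\mathbf{x},f_1,p}(S)-v_{\mathbf{x},f_2,p}(S)|\le T\epsilon$ for every $\mathbf{x}$ and every $S$. *)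

theory Defs
  imports "HOL-Analysis.Analysis"
begin

text \<open>Points of R^d are vectors real^'n for an arbitrary finite index type 'n (so d = CARD('n) \<ge> 1);
  subsets S of [d] are sets of type 'n set.\<close>

definition mrg :: "'n set \<Rightarrow> real^'n \<Rightarrow> real^'n \<Rightarrow> real^'n" where
  "mrg S x z = (\<chi> i. if i \<in> S then x $ i else z $ i)"

text \<open>(x_S; z_Sbar) where z only supplies the coordinates outside S.\<close>
definition mrgf :: "'n set \<Rightarrow> real^'n \<Rightarrow> ('n \<Rightarrow> real) \<Rightarrow> real^'n" where
  "mrgf S x z = (\<chi> i. if i \<in> S then x $ i else z i)"

definition prob_density :: "(real^'n \<Rightarrow> real) \<Rightarrow> bool" where
  "prob_density p \<longleftrightarrow> p \<in> borel_measurable lborel \<and> (\<forall>z. 0 \<le> p z)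
     \<and> (\<integral>\<^sup>+ z. ennreal (p z) \<partial>lborel) = 1"

text \<open>Value functions take arguments: explicand x, model f, density p, coalition S.\<close>
type_synonym ('n) value_fun =
  "real^'n \<Rightarrow> (real^'n \<Rightarrow> real) \<Rightarrow> (real^'n \<Rightarrow> real) \<Rightarrow> 'n set \<Rightarrow> real"

definition strong_robust :: "('n::finite) value_fun \<Rightarrow> real \<Rightarrow> bool" where
  "strong_robust v T \<longleftrightarrow>
     (\<forall>f1 f2 p \<epsilon>. prob_density p \<longrightarrow> (\<forall>z. \<bar>f1 z - f2 z\<bar> * p z \<le> \<epsilon>) \<longrightarrow>
        (\<forall>x S. \<bar>v x f1 p S - v x f2 p S\<bar> \<le> T * \<epsilon>))"

definition bshap :: "real^('n::finite) \<Rightarrow> 'n value_fun" where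
  "bshap x' x f p S = f (mrg S x x')"

text \<open>Conditional expectation value function: the conditional density of x''_Sbar given x_S is
  p(x_S; z) / \<integral> p(x_S; z) dz, integrating over the coordinates outside S (Lebesgue measure on R^Sbar).\<close>
definition ces :: "('n::finite) value_fun" where
  "ces x f p S =
     (\<integral> z. f (mrgf S x z) * p (mrgf S x z) \<partial>(\<Pi>\<^sub>M i\<in>-S. lborel))
     / (\<integral> z. p (mrgf S x z) \<partial>(\<Pi>\<^sub>M i\<in>-S. lborel))"

end

theory Submission
  imports Defs
begin

text \<open>Both value functions evaluate the model at a single point: Bshap at the baseline (for the
  empty coalition), CES at the explicand (for the full coalition, wherever the density is positive).
  Take the uniform density on a box of volume at least M around that point and let the two models
  differ by the constant M. Then the density-weighted difference of the models is at most 1, while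
  the value functions differ by M, which can be made arbitrarily large.\<close>

lemma prob_density_uniform_cbox:
  fixes a b :: "real^'n"
  assumes "measure lborel (cbox a b) > 0"
  shows "prob_density (\<lambda>z. indicator (cbox a b) z / measure lborel (cbox a b))"
proof -
  let ?V = "measure lborel (cbox a b)"
  have "(\<integral>\<^sup>+ z. ennreal (indicator (cbox a b) z / ?V) \<partial>lborel)
      = (\<integral>\<^sup>+ z. ennreal (1 / ?V) * indicator (cbox a b) z \<partial>lborel)"
    by (rule nn_integral_cong) (auto simp: indicator_def)
  also have "\<dots> = ennreal (1 / ?V) * emeasure lborel (cbox a b)"
    by (simp add: nn_integral_cmult_indicator)
  also have "emeasure lborel (cbox a b) = ennreal ?V"
    using emeasure_lborel_cbox_finite[of a b] by (intro emeasure_eq_ennreal_measure) simp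
  also have "ennreal (1 / ?V) * ennreal ?V = 1"
    using assms by (simp flip: ennreal_mult)
  finally show ?thesis
    unfolding prob_density_def using assms by (auto simp: indicator_def)
qed

lemma exists_prob_density_pos_bounded:
  fixes z\<^sub>0 :: "real^'n" and M :: real
  obtains p where "prob_density p" "p z\<^sub>0 > 0" "\<And>z. M * p z \<le> 1"
proof -
  define c where "c = max 1 M"
  define b where "b = z\<^sub>0 + (\<chi> i. c)"
  have c: "c \<ge> 1" "c \<ge> M" unfolding c_def by auto
  have box: "z\<^sub>0 \<in> cbox z\<^sub>0 b"
    using c by (simp add: b_def mem_box_cart)
  then have vol: "measure lborel (cbox z\<^sub>0 b) = c ^ CARD('n)"
    by (subst content_cbox_cart) (auto simp: b_def)
  have "M \<le> c ^ 1" using c by simp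
  also have "\<dots> \<le> c ^ CARD('n)" using c by (intro power_increasing) (auto simp: Suc_leI)
  finally have M_vol: "M \<le> measure lborel (cbox z\<^sub>0 b)" by (simp add: vol)
  have vol_pos: "measure lborel (cbox z\<^sub>0 b) > 0" using c by (simp add: vol)
  show thesis
  proof
    show "prob_density (\<lambda>z. indicator (cbox z\<^sub>0 b) z / measure lborel (cbox z\<^sub>0 b))"
      using vol_pos by (rule prob_density_uniform_cbox)
    show "indicator (cbox z\<^sub>0 b) z\<^sub>0 / measure lborel (cbox z\<^sub>0 b) > 0"
      using box vol_pos by simp
    show "M * (indicator (cbox z\<^sub>0 b) z / measure lborel (cbox z\<^sub>0 b)) \<le> 1" for z
      using M_vol vol_pos by (auto simp: indicator_def field_simps)
  qed
qed

lemma not_strong_robust_if_evaluates_model: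
  fixes v :: "('n::finite) value_fun"
  assumes evaluates: "\<And>f p. prob_density p \<Longrightarrow> p z\<^sub>0 > 0 \<Longrightarrow> v x f p S = f z\<^sub>0"
  shows "\<not> strong_robust v T"
proof
  assume robust: "strong_robust v T"
  define M where "M = \<bar>T\<bar> + 1"
  have "M > 0" unfolding M_def by simp
  obtain p where p: "prob_density p" "p z\<^sub>0 > 0" and bounded: "\<And>z. M * p z \<le> 1"
    using exists_prob_density_pos_bounded[where z\<^sub>0 = z\<^sub>0 and M = M] by blast
  have "\<bar>0 - M\<bar> * p z \<le> 1" for z
    using bounded \<open>M > 0\<close> by simp
  then have "\<bar>v x (\<lambda>_. 0) p S - v x (\<lambda>_. M) p S\<bar> \<le> T * 1"
    using robust p(1) unfolding strong_robust_def by presburger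
  then have "M \<le> T"
    using p by (simp add: evaluates M_def)
  then show False unfolding M_def by linarith
qed

lemma bshap_empty: "bshap x' x f p {} = f x'"
  by (simp add: bshap_def mrg_def)

lemma ces_UNIV:
  assumes "p x > 0"
  shows "ces x f p UNIV = f x"
proof -
  have "mrgf UNIV x z = x" for z by (simp add: mrgf_def vec_eq_iff)
  then show ?thesis using assms by (simp add: ces_def PiM_empty)
qed

theorem proposition2:
  fixes x' :: "real^'n"
  shows "(\<forall>T::real. \<not> strong_robust (bshap x') T) \<and> (\<forall>T::real. \<not> strong_robust (ces :: 'n value_fun) T)"
proof (intro conjI allI)
  fix T :: real
  show "\<not> strong_robust (bshap x') T"
    by (rule not_strong_robust_if_evaluates_model[where x = x' and S = "{}" and z\<^sub>0 = x'])
      (simp add: bshap_empty)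
  show "\<not> strong_robust (ces :: 'n value_fun) T"
    by (rule not_strong_robust_if_evaluates_model[where x = x' and S = UNIV and z\<^sub>0 = x'])
      (simp add: ces_UNIV)
qed

end
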